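(* For $|q|<1$ and nonzero complex $x,y,u,v$, $$\begin{aligned}&4qxyuv[-q^2x^2,-q^2y^2,-q^2u^2,-q^2v^2;q^2]_\infty+4q^{1/2}xy[-q^2x^2,-q^2y^2,-qu^2,-qv^2;q^2]_\infty\\&\quad+4q^{1/2}uv[-qx^2,-qy^2,-q^2u^2,-q^2v^2;q^2]_\infty+4[-qx^2,-qy^2,-qu^2,-qv^2;q^2]_\infty\\&=\frac{(q^{1/2};q^{1/2})_\infty^4}{(q^2;q^2)_\infty^4}\Big([-q^{1/4}x,-q^{1/4}y,-q^{1/4}u,-q^{1/4}v;q^{1/2}]_\infty+[q^{1/4}x,q^{1/4}y,-q^{1/4}u,-q^{1/4}v;q^{1/2}]_\infty\\&\qquad+[-q^{1/4}x,-q^{1/4}y,q^{1/4}u,q^{1/4}v;q^{1/2}]_\infty+[q^{1/4}x,q^{1/4}y,q^{1/4}u,q^{1/4}v;q^{1/2}]_\infty\Big).\end{aligned}$$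
   Context: $(z;p)_\infty=\prod_{k\ge0}(1-zp^k)$, $[z;p]_\infty=(z;p)_\infty(p/z;p)_\infty$, and $[z_1,\dots,z_n;p]_\infty=\prod_j[z_j;p]_\infty$. Fractional powers of $q$ are fixed consistently (e.g. $q^{1/4}$ any fixed fourth root, $q^{1/2}=(q^{1/4})^2$). *)

theory Defs
  imports "HOL-Analysis.Analysis"
begin

definition qpoch :: "complex \<Rightarrow> complex \<Rightarrow> complex" where
  "qpoch z p = (\<Prod>k. (1 - z * p ^ k))"

definition qtheta :: "complex \<Rightarrow> complex \<Rightarrow> complex" where
  "qtheta z p = qpoch z p * qpoch (p / z) p"

definition qthetas :: "complex list \<Rightarrow> complex \<Rightarrow> complex" where
  "qthetas zs p = prod_list (map (\<lambda>z. qtheta z p) zs)"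

end

theory Submission
  imports Defs
begin

text \<open>Write a = q^(1/4). By the Jacobi triple product, (a^2;a^2)_inf [-a x;a^2]_inf is the bilateral
series sum_k a^(k^2) x^k. Splitting it by the parity of k gives
  (a^2;a^2)_inf [-+a x;a^2]_inf = (q^2;q^2)_inf (E x +- a x C x),
  E z = [-q z^2;q^2]_inf,  C z = [-q^2 z^2;q^2]_inf.
Summing over the four sign patterns on the right-hand side cancels everything odd in (x,y) or in (u,w),
leaving 4 (E x E y + a^2 x y C x C y) (E u E w + a^2 u w C u C w), which expands to the left-hand side.
The triple product itself is the limit of its finite form, a consequence of Cauchy's q-binomial theorem;
Tannery's theorem justifies the termwise passage to the limit.\<close>

definition qfact :: "complex \<Rightarrow> nat \<Rightarrow> complex" where
  "qfact q n = (\<Prod>i<n. 1 - q ^ Suc i)"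

definition qbinomial :: "complex \<Rightarrow> nat \<Rightarrow> nat \<Rightarrow> complex" where
  "qbinomial q n k = (if k \<le> n then qfact q n / (qfact q k * qfact q (n - k)) else 0)"

lemma qfact_0 [simp]: "qfact q 0 = 1"
  by (simp add: qfact_def)

lemma qfact_Suc: "qfact q (Suc n) = qfact q n * (1 - q ^ Suc n)"
  by (simp add: qfact_def)

lemma power_neq_one:
  fixes q :: complex
  assumes "norm q < 1" "n > 0"
  shows "q ^ n \<noteq> 1"
proof
  assume "q ^ n = 1"
  then have "norm q ^ n = 1" by (metis norm_one norm_power)
  with assms show False using power_less_one_iff[of "norm q" n] by simp
qed

lemma qfact_nonzero: "norm q < 1 \<Longrightarrow> qfact q n \<noteq> 0"
  by (simp add: qfact_def power_neq_one del: power_Suc)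

lemma qbinomial_0_right [simp]: "norm q < 1 \<Longrightarrow> qbinomial q n 0 = 1"
  by (simp add: qbinomial_def qfact_nonzero)

lemma qbinomial_self [simp]: "norm q < 1 \<Longrightarrow> qbinomial q n n = 1"
  by (simp add: qbinomial_def qfact_nonzero)

lemma qbinomial_eq_0 [simp]: "n < k \<Longrightarrow> qbinomial q n k = 0"
  by (simp add: qbinomial_def)

lemma qbinomial_Suc_Suc:
  assumes q: "norm q < 1"
  shows "qbinomial q (Suc n) (Suc k) = qbinomial q n k + q ^ Suc k * qbinomial q n (Suc k)"
proof (cases "k < n")
  case True
  then obtain d where n: "n = Suc k + d" using less_imp_Suc_add by blast
  have frac: "F * (A + r * B) / (K * A * (D * B)) = F / (K * (D * B)) + r * (F / (K * A * D))"
    if "K \<noteq> 0" "D \<noteq> 0" "A \<noteq> 0" "B \<noteq> 0" for F K D A B r :: complex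
    using that by (simp add: field_simps)
  have "1 - q ^ Suc n = (1 - q ^ Suc k) + q ^ Suc k * (1 - q ^ Suc d)"
    by (simp add: n power_add algebra_simps)
  then have "qbinomial q (Suc n) (Suc k)
      = qfact q n * ((1 - q ^ Suc k) + q ^ Suc k * (1 - q ^ Suc d))
        / (qfact q k * (1 - q ^ Suc k) * (qfact q d * (1 - q ^ Suc d)))"
    by (simp add: qbinomial_def qfact_Suc n)
  also have "\<dots> = qbinomial q n k + q ^ Suc k * qbinomial q n (Suc k)"
    using q by (subst frac) (simp_all add: qbinomial_def qfact_Suc qfact_nonzero power_neq_one n
        del: power_Suc)
  finally show ?thesis .
next
  case False
  then show ?thesis using q by (cases "k = n") simp_all
qed

lemma prod_qbinomial_expand:
  assumes q: "norm q < 1"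
  shows "(\<Prod>i<n. Y - X * q ^ i) = (\<Sum>k\<le>n. qbinomial q n k * q ^ (k choose 2) * (-X) ^ k * Y ^ (n - k))"
proof (induction n arbitrary: X)
  case 0
  then show ?case using q by (simp add: binomial_eq_0)
next
  case (Suc n)
  define c where "c k = q ^ (k choose 2) * (-X) ^ k" for k
  define h where "h k = qbinomial q n k * q ^ k * c k * Y ^ (Suc n - k)" for k
  define g where "g k = qbinomial q n k * c (Suc k) * Y ^ (n - k)" for k
  have c_Suc: "c (Suc k) = - X * q ^ k * c k" for k
    by (simp add: c_def numeral_2_eq_2 power_add)
  have "(\<Prod>i<Suc n. Y - X * q ^ i) = (Y - X) * (\<Prod>i<n. Y - (X * q) * q ^ i)"
    by (subst prod.lessThan_Suc_shift) (simp add: mult_ac)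
  also have "\<dots> = (\<Sum>k\<le>n. h k + g k)"
    unfolding Suc.IH sum_distrib_left
  proof (intro sum.cong refl)
    fix k assume "k \<in> {..n}"
    then have "Y ^ (Suc n - k) = Y * Y ^ (n - k)" by (simp add: Suc_diff_le)
    moreover have "q ^ (k choose 2) * (- (X * q)) ^ k = q ^ k * c k"
      by (simp add: c_def mult.commute flip: power_mult_distrib)
    ultimately show "(Y - X) * (qbinomial q n k * q ^ (k choose 2) * (- (X * q)) ^ k * Y ^ (n - k))
        = h k + g k"
      unfolding h_def g_def c_Suc by (simp add: algebra_simps)
  qed
  also have "\<dots> = h 0 + (\<Sum>k\<le>n. h (Suc k) + g k)"
    using sum.atMost_Suc_shift[of h n] by (simp add: sum.distrib h_def)
  also have "\<dots> = (\<Sum>k\<le>Suc n. qbinomial q (Suc n) k * c k * Y ^ (Suc n - k))"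
    using q by (subst sum.atMost_Suc_shift)
      (simp add: h_def g_def qbinomial_Suc_Suc sum.distrib algebra_simps del: sum.atMost_Suc)
  finally show ?case by (simp add: c_def mult.assoc)
qed

lemma prod_lessThan_add: "(\<Prod>i<m + n. f i) = (\<Prod>i<m. f i) * (\<Prod>i<n. f (m + i))"
  for f :: "nat \<Rightarrow> 'a::comm_monoid_mult"
  by (induction n) (simp_all add: mult_ac)

lemma prod_power_odd: "(\<Prod>i<n. a ^ (2 * i + 1)) = a ^ n\<^sup>2"
  for a :: "'a::comm_monoid_mult"
proof (induction n)
  case (Suc n)
  have "(Suc n)\<^sup>2 = n\<^sup>2 + (2 * n + 1)" by (simp add: power2_eq_square)
  with Suc show ?case by (simp add: power_add mult_ac)
qed simp

lemma finite_jacobi_exponent: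
  fixes j n :: nat
  assumes "j \<le> 2 * n"
  shows "2 * (j choose 2) + j + 2 * n * (2 * n - j) = 3 * n\<^sup>2 + (if n \<le> j then j - n else n - j)\<^sup>2"
proof -
  have sq: "2 * (j choose 2) + j = j * j"
    by (cases j) (simp_all add: choose_two)
  show ?thesis
  proof (cases "n \<le> j")
    case True
    then obtain e where e: "j = n + e" using le_Suc_ex by blast
    with assms obtain f where "n = e + f" using le_Suc_ex by (metis add_le_cancel_left mult_2)
    then show ?thesis using sq True unfolding e by (simp add: power2_eq_square algebra_simps)
  next
    case False
    then obtain e where "n = j + e" using le_Suc_ex nat_le_linear by metis
    then show ?thesis using sq False by (simp add: power2_eq_square algebra_simps)
  qed
qed

lemma prod_centered_qbinomial_expand:
  fixes a x :: complex
  assumes a1: "norm a < 1"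
  shows "(\<Prod>i<2*n. a ^ (2*n) + a * x * (a\<^sup>2) ^ i)
       = a ^ (3 * n\<^sup>2) * (\<Sum>j\<le>2*n. qbinomial (a\<^sup>2) (2*n) j * a ^ (if n \<le> j then j - n else n - j)\<^sup>2 * x ^ j)"
proof -
  have q: "norm (a\<^sup>2) < 1" using a1 by (simp add: norm_power power_less_one_iff)
  have "(\<Prod>i<2*n. a ^ (2*n) + a * x * (a\<^sup>2) ^ i)
      = (\<Sum>j\<le>2*n. qbinomial (a\<^sup>2) (2*n) j * (a\<^sup>2) ^ (j choose 2) * (a*x) ^ j * (a ^ (2*n)) ^ (2*n - j))"
    using prod_qbinomial_expand[OF q, of "a ^ (2*n)" "-(a*x)" "2*n"] by simp
  also have "\<dots> = a ^ (3 * n\<^sup>2) * (\<Sum>j\<le>2*n. qbinomial (a\<^sup>2) (2*n) j * a ^ (if n \<le> j then j - n else n - j)\<^sup>2 * x ^ j)"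
    unfolding sum_distrib_left
  proof (intro sum.cong refl)
    fix j assume "j \<in> {..2*n}"
    have "(a\<^sup>2) ^ (j choose 2) * (a*x) ^ j * (a ^ (2*n)) ^ (2*n - j)
        = a ^ (2 * (j choose 2) + j + 2 * n * (2 * n - j)) * x ^ j"
      by (simp add: power_add power_mult power_mult_distrib mult_ac)
    also have "\<dots> = a ^ (3 * n\<^sup>2) * a ^ (if n \<le> j then j - n else n - j)\<^sup>2 * x ^ j"
      using \<open>j \<in> {..2*n}\<close> by (simp only: finite_jacobi_exponent atMost_iff power_add)
    finally show "qbinomial (a\<^sup>2) (2*n) j * (a\<^sup>2) ^ (j choose 2) * (a*x) ^ j * (a ^ (2*n)) ^ (2*n - j)
        = a ^ (3 * n\<^sup>2) * (qbinomial (a\<^sup>2) (2*n) j * a ^ (if n \<le> j then j - n else n - j)\<^sup>2 * x ^ j)"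
      by (simp add: mult_ac)
  qed
  finally show ?thesis .
qed

lemma prod_centered_factor:
  fixes a x :: complex
  assumes a0: "a \<noteq> 0" and x0: "x \<noteq> 0"
  shows "(\<Prod>i<2*n. a ^ (2*n) + a * x * (a\<^sup>2) ^ i)
       = a ^ (3 * n\<^sup>2) * (x ^ n * (\<Prod>i<n. 1 - (-(a*x)) * (a\<^sup>2) ^ i) * (\<Prod>i<n. 1 - (a\<^sup>2 / (-(a*x))) * (a\<^sup>2) ^ i))"
    (is "_ = _ * (_ * ?A * ?B)")
proof -
  define f where "f i = a ^ (2*n) + a * x * (a\<^sup>2) ^ i" for i
  have upper: "(\<Prod>i<n. f (n + i)) = a ^ (2 * n\<^sup>2) * ?A"
  proof -
    have "f (n + i) = a ^ (2*n) * (1 - (-(a*x)) * (a\<^sup>2) ^ i)" for i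
      unfolding f_def by (simp add: power_add algebra_simps flip: power_mult)
    then show ?thesis
      by (simp add: prod.distrib power2_eq_square mult.assoc flip: power_mult)
  qed
  have lower: "(\<Prod>i<n. f i) = x ^ n * a ^ n\<^sup>2 * ?B"
  proof -
    have "f (n - Suc i) = x * a ^ (2 * (n - Suc i) + 1) * (1 - (a\<^sup>2 / (-(a*x))) * (a\<^sup>2) ^ i)"
      if "i < n" for i
    proof -
      obtain k where "n = Suc i + k" using \<open>i < n\<close> less_imp_Suc_add by blast
      then show ?thesis
        unfolding f_def using a0 x0
        by (simp add: power_add power_mult_distrib mult_2 mult_2_right power2_eq_square field_simps)
    qed
    then have "(\<Prod>i<n. f (n - Suc i)) = x ^ n * (\<Prod>i<n. a ^ (2 * (n - Suc i) + 1)) * ?B"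
      by (simp add: prod.distrib)
    moreover have "(\<Prod>i<n. a ^ (2 * (n - Suc i) + 1)) = a ^ n\<^sup>2"
      using prod.nat_diff_reindex[of "\<lambda>i. a ^ (2 * i + 1)" n] by (simp only: prod_power_odd)
    ultimately show ?thesis
      by (simp only: prod.nat_diff_reindex)
  qed
  have "(\<Prod>i<2*n. f i) = a ^ (3 * n\<^sup>2) * (x ^ n * ?A * ?B)"
    unfolding mult_2 prod_lessThan_add lower upper
    by (simp add: numeral_3_eq_3 mult_2 power_add mult_ac)
  then show ?thesis unfolding f_def .
qed

lemma finite_jacobi_triple_product:
  fixes a x :: complex
  assumes a0: "a \<noteq> 0" and a1: "norm a < 1" and x0: "x \<noteq> 0"
  shows "(\<Sum>m\<le>n. a ^ m\<^sup>2 * (qbinomial (a\<^sup>2) (2*n) (n+m) * x ^ m + qbinomial (a\<^sup>2) (2*n) (n-m) * (1/x) ^ m))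
       = (\<Prod>i<n. 1 - (-(a*x)) * (a\<^sup>2) ^ i) * (\<Prod>i<n. 1 - (a\<^sup>2 / (-(a*x))) * (a\<^sup>2) ^ i)
         + qbinomial (a\<^sup>2) (2*n) n"
    (is "?L = ?A * ?B + _")
proof -
  define F where "F j = qbinomial (a\<^sup>2) (2*n) j * a ^ (if n \<le> j then j - n else n - j)\<^sup>2 * x ^ j" for j
  have upper_half: "(\<Sum>m\<le>n. F (n + m)) = F n + (\<Sum>j=Suc n..n+n. F j)"
    using sum.shift_bounds_cl_nat_ivl[of F 1 n n]
    by (simp add: atMost_atLeast0 sum.atLeast_Suc_atMost add.commute)
  have lower_half: "(\<Sum>m\<le>n. F (n - m)) = (\<Sum>j\<le>n. F j)"
    using sum.atLeastAtMost_rev[of F 0 n] by (simp add: atMost_atLeast0)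
  have "x ^ n * ?L = (\<Sum>m\<le>n. F (n + m) + F (n - m))"
    unfolding sum_distrib_left
  proof (intro sum.cong refl)
    fix m assume "m \<in> {..n}"
    then have "x ^ n * (1/x) ^ m = x ^ (n - m)"
      using x0 by (simp add: power_diff power_one_over)
    then have "F (n - m) = qbinomial (a\<^sup>2) (2*n) (n-m) * a ^ m\<^sup>2 * (x ^ n * (1/x) ^ m)"
      using \<open>m \<in> {..n}\<close> by (cases "m = 0") (simp_all add: F_def)
    moreover have "F (n + m) = qbinomial (a\<^sup>2) (2*n) (n+m) * a ^ m\<^sup>2 * (x ^ n * x ^ m)"
      by (simp add: F_def power_add)
    ultimately show "x ^ n * (a ^ m\<^sup>2 * (qbinomial (a\<^sup>2) (2*n) (n+m) * x ^ m
        + qbinomial (a\<^sup>2) (2*n) (n-m) * (1/x) ^ m)) = F (n + m) + F (n - m)"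
      by (simp add: algebra_simps)
  qed
  also have "\<dots> = F n + (\<Sum>j\<le>2*n. F j)"
  proof -
    have "(\<Sum>j\<le>2*n. F j) = (\<Sum>j\<le>n. F j) + (\<Sum>j=Suc n..n+n. F j)"
      using sum.ub_add_nat[of 0 n F n] by (simp add: mult_2 atMost_atLeast0)
    then show ?thesis unfolding sum.distrib upper_half lower_half by simp
  qed
  also have "\<dots> = x ^ n * (?A * ?B + qbinomial (a\<^sup>2) (2*n) n)"
  proof -
    have "(\<Sum>j\<le>2*n. F j) = x ^ n * ?A * ?B"
      using prod_centered_qbinomial_expand[OF a1, where x = x and n = n]
        prod_centered_factor[OF a0 x0, where n = n] a0
      by (simp add: F_def)
    moreover have "F n = x ^ n * qbinomial (a\<^sup>2) (2*n) n" by (simp add: F_def)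
    ultimately show ?thesis by (simp add: algebra_simps)
  qed
  finally show ?thesis using x0 by simp
qed


lemma qpoch_convergent_prod:
  fixes z p :: complex
  assumes "norm p < 1"
  shows "convergent_prod (\<lambda>i. 1 - z * p ^ i)"
proof -
  have "summable (\<lambda>i. norm ((1 - z * p ^ i) - 1))"
    using assms by (simp add: norm_mult norm_power summable_mult summable_geometric)
  then show ?thesis
    by (intro abs_convergent_prod_imp_convergent_prod summable_imp_abs_convergent_prod)
qed

lemma qpoch_LIMSEQ:
  fixes z p :: complex
  assumes "norm p < 1"
  shows "(\<lambda>n. \<Prod>i<n. 1 - z * p ^ i) \<longlonglongrightarrow> qpoch z p"
proof -
  have "(\<lambda>n. \<Prod>i<Suc n. 1 - z * p ^ i) \<longlonglongrightarrow> qpoch z p"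
    unfolding qpoch_def lessThan_Suc_atMost
    by (rule convergent_prod_LIMSEQ[OF qpoch_convergent_prod[OF assms]])
  then show ?thesis by (rule LIMSEQ_imp_Suc)
qed

lemma qpoch_nonzero:
  fixes p :: complex
  assumes "norm p < 1"
  shows "qpoch p p \<noteq> 0"
  unfolding qpoch_def
  by (rule prodinf_nonzero[OF qpoch_convergent_prod[OF assms]])
    (metis assms power_Suc power_neq_one right_minus_eq zero_less_Suc)

lemma qfact_LIMSEQ: "norm q < 1 \<Longrightarrow> qfact q \<longlonglongrightarrow> qpoch q q"
  using qpoch_LIMSEQ[of q q] unfolding qfact_def power_Suc .

lemma LIMSEQ_nonzero_imp_norm_bounded_below:
  fixes X :: "nat \<Rightarrow> 'a::real_normed_div_algebra"
  assumes "X \<longlonglongrightarrow> L" "L \<noteq> 0" "\<And>n. X n \<noteq> 0"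
  obtains \<beta> where "\<beta> > 0" "\<And>n. \<beta> \<le> norm (X n)"
proof -
  have "(\<lambda>n. inverse (X n)) \<longlonglongrightarrow> inverse L" using assms by (intro tendsto_inverse)
  then have "Bseq (\<lambda>n. inverse (X n))" by (intro convergent_imp_Bseq) (auto simp: convergent_def)
  then obtain K where K: "K > 0" "\<And>n. norm (inverse (X n)) \<le> K" by (auto elim: BseqE)
  have "1 / K \<le> norm (X n)" for n
  proof -
    have "inverse (norm (X n)) \<le> K" using K(2)[of n] by (simp add: norm_inverse)
    then show ?thesis using assms(3)[of n] K(1) by (simp add: field_simps)
  qed
  with K(1) show ?thesis by (intro that[of "1 / K"]) auto
qed

lemma qbinomial_bounded:
  assumes q: "norm q < 1"
  obtains B where "\<And>n k. norm (qbinomial q n k) \<le> B"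
proof -
  have lim: "qfact q \<longlonglongrightarrow> qpoch q q" by (rule qfact_LIMSEQ[OF q])
  obtain \<beta> where \<beta>: "\<beta> > 0" "\<And>n. \<beta> \<le> norm (qfact q n)"
    using LIMSEQ_nonzero_imp_norm_bounded_below[OF lim qpoch_nonzero[OF q] qfact_nonzero[OF q]] by blast
  have "Bseq (qfact q)" using lim by (intro convergent_imp_Bseq) (auto simp: convergent_def)
  then obtain U where U: "U > 0" "\<And>n. norm (qfact q n) \<le> U" by (auto elim: BseqE)
  have "norm (qbinomial q n k) \<le> U / (\<beta> * \<beta>)" for n k
  proof (cases "k \<le> n")
    case True
    then have "norm (qbinomial q n k) = norm (qfact q n) / (norm (qfact q k) * norm (qfact q (n - k)))"
      by (simp add: qbinomial_def norm_divide norm_mult)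
    also have "\<dots> \<le> U / (\<beta> * \<beta>)"
      using \<beta> U by (intro frac_le mult_mono) auto
    finally show ?thesis .
  qed (use U \<beta> in simp)
  then show ?thesis by (rule that)
qed

lemma qbinomial_central_LIMSEQ:
  assumes q: "norm q < 1"
  shows "(\<lambda>n. qbinomial q (2*n) (n+k)) \<longlonglongrightarrow> 1 / qpoch q q"
    and "(\<lambda>n. qbinomial q (2*n) (n-k)) \<longlonglongrightarrow> 1 / qpoch q q"
proof -
  let ?L = "qpoch q q"
  have lim: "qfact q \<longlonglongrightarrow> ?L" by (rule qfact_LIMSEQ[OF q])
  have "strict_mono (\<lambda>n::nat. 2*n)" by (simp add: strict_mono_def)
  from LIMSEQ_subseq_LIMSEQ[OF lim this] have "(\<lambda>n. qfact q (2*n)) \<longlonglongrightarrow> ?L" by (simp add: o_def)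
  moreover have "(\<lambda>n. qfact q (n + k)) \<longlonglongrightarrow> ?L" by (rule LIMSEQ_ignore_initial_segment[OF lim])
  moreover have "(\<lambda>n. qfact q (n - k)) \<longlonglongrightarrow> ?L"
    by (rule filterlim_compose[OF lim filterlim_minus_const_nat_at_top])
  ultimately have "(\<lambda>n. qfact q (2*n) / (qfact q (n+k) * qfact q (n-k))) \<longlonglongrightarrow> ?L / (?L * ?L)"
    using qpoch_nonzero[OF q] by (intro tendsto_intros) auto
  then have lim_frac: "(\<lambda>n. qfact q (2*n) / (qfact q (n+k) * qfact q (n-k))) \<longlonglongrightarrow> 1 / ?L"
    using qpoch_nonzero[OF q] by simp
  show "(\<lambda>n. qbinomial q (2*n) (n+k)) \<longlonglongrightarrow> 1 / ?L"
    by (rule Lim_transform_eventually[OF lim_frac], use eventually_ge_at_top[of k] in eventually_elim)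
      (simp add: qbinomial_def)
  show "(\<lambda>n. qbinomial q (2*n) (n-k)) \<longlonglongrightarrow> 1 / ?L"
    by (rule Lim_transform_eventually[OF lim_frac], use eventually_ge_at_top[of k] in eventually_elim)
      (simp add: qbinomial_def mult.commute)
qed

lemma summable_power_square:
  fixes r s :: real
  assumes "0 \<le> r" "r < 1" "0 \<le> s"
  shows "summable (\<lambda>k. r ^ k\<^sup>2 * s ^ k)"
proof (rule summable_comparison_test_ev)
  show "summable (\<lambda>k. (1/2::real) ^ k)" by (rule summable_geometric) simp
  have "(\<lambda>k. r ^ k * s) \<longlonglongrightarrow> 0 * s"
    using assms by (intro tendsto_mult LIMSEQ_power_zero tendsto_const) auto
  then have "eventually (\<lambda>k. r ^ k * s < 1/2) sequentially"
    by (intro order_tendstoD) auto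
  then show "eventually (\<lambda>k. norm (r ^ k\<^sup>2 * s ^ k) \<le> (1/2) ^ k) sequentially"
  proof eventually_elim
    case (elim k)
    have "norm (r ^ k\<^sup>2 * s ^ k) = (r ^ k * s) ^ k"
      using assms by (simp add: power2_eq_square power_mult power_mult_distrib)
    also have "\<dots> \<le> (1/2) ^ k" using elim assms by (intro power_mono) auto
    finally show ?case .
  qed
qed

definition jacobi_partial_term :: "complex \<Rightarrow> complex \<Rightarrow> nat \<Rightarrow> nat \<Rightarrow> complex" where
  "jacobi_partial_term a x m n = (if m \<le> n then a ^ m\<^sup>2 *
     (qbinomial (a\<^sup>2) (2*n) (n+m) * x ^ m + qbinomial (a\<^sup>2) (2*n) (n-m) * (1/x) ^ m) else 0)"

lemma suminf_jacobi_partial_term: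
  fixes a x :: complex
  assumes "a \<noteq> 0" "norm a < 1" "x \<noteq> 0"
  shows "(\<Sum>m. jacobi_partial_term a x m n)
       = (\<Prod>i<n. 1 - (-(a*x)) * (a\<^sup>2) ^ i) * (\<Prod>i<n. 1 - (a\<^sup>2 / (-(a*x))) * (a\<^sup>2) ^ i)
         + qbinomial (a\<^sup>2) (2*n) n"
proof -
  have "(\<Sum>m. jacobi_partial_term a x m n) = (\<Sum>m\<le>n. jacobi_partial_term a x m n)"
    by (rule suminf_finite) (auto simp: jacobi_partial_term_def)
  then show ?thesis
    by (simp add: jacobi_partial_term_def finite_jacobi_triple_product[OF assms])
qed

lemma jacobi_partial_term_LIMSEQ:
  fixes a x :: complex
  assumes "norm a < 1"
  shows "(\<lambda>n. jacobi_partial_term a x m n) \<longlonglongrightarrow> a ^ m\<^sup>2 * (x ^ m + (1/x) ^ m) / qpoch (a\<^sup>2) (a\<^sup>2)"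
proof -
  let ?L = "qpoch (a\<^sup>2) (a\<^sup>2)"
  have q: "norm (a\<^sup>2) < 1" using assms by (simp add: norm_power power_less_one_iff)
  have "(\<lambda>n. a ^ m\<^sup>2 * (qbinomial (a\<^sup>2) (2*n) (n+m) * x ^ m + qbinomial (a\<^sup>2) (2*n) (n-m) * (1/x) ^ m))
      \<longlonglongrightarrow> a ^ m\<^sup>2 * (1/?L * x ^ m + 1/?L * (1/x) ^ m)"
    using qbinomial_central_LIMSEQ[OF q, of m] by (intro tendsto_intros)
  moreover have "a ^ m\<^sup>2 * (1/?L * x ^ m + 1/?L * (1/x) ^ m) = a ^ m\<^sup>2 * (x ^ m + (1/x) ^ m) / ?L"
    by (simp add: add_divide_distrib algebra_simps)
  ultimately show ?thesis
    by (metis (lifting) Lim_transform_eventually[OF _ eventually_mono[OF eventually_ge_at_top[of m]]]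
        jacobi_partial_term_def)
qed

lemma jacobi_partial_term_bound:
  fixes a x :: complex
  assumes "norm a < 1"
  obtains B where "\<And>m n. norm (jacobi_partial_term a x m n)
    \<le> B * (norm a ^ m\<^sup>2 * norm x ^ m) + B * (norm a ^ m\<^sup>2 * norm (1/x) ^ m)"
proof -
  have q: "norm (a\<^sup>2) < 1" using assms by (simp add: norm_power power_less_one_iff)
  obtain B where B: "\<And>n k. norm (qbinomial (a\<^sup>2) n k) \<le> B" using qbinomial_bounded[OF q] by blast
  have "norm (jacobi_partial_term a x m n)
      \<le> B * (norm a ^ m\<^sup>2 * norm x ^ m) + B * (norm a ^ m\<^sup>2 * norm (1/x) ^ m)" for m n
  proof -
    let ?g = "qbinomial (a\<^sup>2) (2*n) (n+m)" and ?h = "qbinomial (a\<^sup>2) (2*n) (n-m)"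
    have "norm (a ^ m\<^sup>2 * (?g * x ^ m + ?h * (1/x) ^ m))
        \<le> norm a ^ m\<^sup>2 * (norm ?g * norm x ^ m + norm ?h * norm (1/x) ^ m)"
      unfolding norm_mult norm_power
      by (intro mult_left_mono) (auto intro: order.trans[OF norm_triangle_ineq] simp: norm_mult norm_power)
    also have "\<dots> \<le> norm a ^ m\<^sup>2 * (B * norm x ^ m + B * norm (1/x) ^ m)"
      by (intro mult_left_mono add_mono mult_right_mono B) auto
    finally show ?thesis
      using order.trans[OF norm_ge_zero B]
      by (simp add: jacobi_partial_term_def algebra_simps)
  qed
  then show ?thesis by (rule that)
qed

lemma jacobi_triple_product_sums:
  fixes a x :: complex
  assumes a0: "a \<noteq> 0" and a1: "norm a < 1" and x0: "x \<noteq> 0"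
  shows "(\<lambda>m. a ^ m\<^sup>2 * (x ^ m + (1/x) ^ m)) sums (qpoch (a\<^sup>2) (a\<^sup>2) * qtheta (-(a*x)) (a\<^sup>2) + 1)"
proof -
  define L where "L = qpoch (a\<^sup>2) (a\<^sup>2)"
  define b where "b m = a ^ m\<^sup>2 * (x ^ m + (1/x) ^ m) / L" for m
  have q: "norm (a\<^sup>2) < 1" using a1 by (simp add: norm_power power_less_one_iff)
  have L0: "L \<noteq> 0" unfolding L_def by (rule qpoch_nonzero[OF q])
  obtain B where B: "\<And>m n. norm (jacobi_partial_term a x m n)
      \<le> B * (norm a ^ m\<^sup>2 * norm x ^ m) + B * (norm a ^ m\<^sup>2 * norm (1/x) ^ m)"
    using jacobi_partial_term_bound[OF a1] by blast
  have "summable (\<lambda>m. B * (norm a ^ m\<^sup>2 * norm x ^ m) + B * (norm a ^ m\<^sup>2 * norm (1/x) ^ m))"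
    using a1 by (intro summable_add summable_mult summable_power_square) auto
  from tannerys_theorem[where a = "jacobi_partial_term a x" and F = sequentially,
      OF jacobi_partial_term_LIMSEQ[OF a1] always_eventually this]
  have tannery: "summable (\<lambda>m. norm (b m))
      \<and> (\<lambda>n. \<Sum>m. jacobi_partial_term a x m n) \<longlonglongrightarrow> (\<Sum>m. b m)"
    using B by (simp add: b_def L_def)
  have "(\<lambda>n. (\<Prod>i<n. 1 - (-(a*x)) * (a\<^sup>2) ^ i) * (\<Prod>i<n. 1 - (a\<^sup>2 / (-(a*x))) * (a\<^sup>2) ^ i)
      + qbinomial (a\<^sup>2) (2*n) n) \<longlonglongrightarrow> qtheta (-(a*x)) (a\<^sup>2) + 1 / L"
    unfolding qtheta_def L_def
    using qbinomial_central_LIMSEQ(2)[OF q, of 0]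
    by (intro tendsto_add tendsto_mult qpoch_LIMSEQ[OF q]) simp_all
  then have "(\<Sum>m. b m) = qtheta (-(a*x)) (a\<^sup>2) + 1 / L"
    using tannery unfolding suminf_jacobi_partial_term[OF a0 a1 x0] by (blast intro: LIMSEQ_unique)
  moreover have "summable b" using tannery by (blast intro: summable_norm_cancel)
  ultimately have "(\<lambda>m. L * b m) sums (L * (qtheta (-(a*x)) (a\<^sup>2) + 1 / L))"
    by (intro sums_mult) (simp add: sums_iff)
  moreover have "(\<lambda>m. L * b m) = (\<lambda>m. a ^ m\<^sup>2 * (x ^ m + (1/x) ^ m))"
    using L0 by (simp add: b_def)
  ultimately show ?thesis
    using L0 by (simp add: L_def distrib_left)
qed

lemma has_sum_int_nonneg_neg:
  fixes f :: "int \<Rightarrow> 'a::topological_comm_monoid_add"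
  assumes "((\<lambda>m. f (int m)) has_sum S) UNIV" and "((\<lambda>m. f (- int (Suc m))) has_sum T) UNIV"
  shows "(f has_sum (S + T)) UNIV"
proof -
  have "(f has_sum S) (range int)" and "(f has_sum T) (range (\<lambda>m. - int (Suc m)))"
    using assms by (simp_all add: has_sum_reindex inj_def o_def del: of_nat_Suc)
  moreover have "range int \<inter> range (\<lambda>m. - int (Suc m)) = {}" by auto
  ultimately have "(f has_sum (S + T)) (range int \<union> range (\<lambda>m. - int (Suc m)))"
    by (rule has_sum_Un_disjoint)
  moreover have "range int \<union> range (\<lambda>m. - int (Suc m)) = UNIV"
  proof -
    have "k \<in> range int \<or> k \<in> range (\<lambda>m. - int (Suc m))" for k :: int
    proof (cases "k \<ge> 0")
      case True
      then have "k = int (nat k)" by simp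
      then show ?thesis by blast
    next
      case False
      then have "k = - int (Suc (nat (- k - 1)))" by simp
      then show ?thesis by blast
    qed
    then show ?thesis by blast
  qed
  ultimately show ?thesis by simp
qed

lemma has_sum_int_even_odd:
  fixes f :: "int \<Rightarrow> 'a::topological_comm_monoid_add"
  assumes "((\<lambda>j. f (2 * j)) has_sum S) UNIV" and "((\<lambda>j. f (2 * j + 1)) has_sum T) UNIV"
  shows "(f has_sum (S + T)) UNIV"
proof -
  have "(f has_sum S) (range (\<lambda>j. 2 * j))" and "(f has_sum T) (range (\<lambda>j. 2 * j + 1))"
    using assms by (simp_all add: has_sum_reindex inj_on_def o_def)
  moreover have "range (\<lambda>j::int. 2 * j) \<inter> range (\<lambda>j. 2 * j + 1) = {}" by auto presburger
  ultimately have "(f has_sum (S + T)) (range (\<lambda>j. 2 * j) \<union> range (\<lambda>j. 2 * j + 1))"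
    by (rule has_sum_Un_disjoint)
  moreover have "range (\<lambda>j::int. 2 * j) \<union> range (\<lambda>j. 2 * j + 1) = UNIV"
  proof -
    have "k \<in> range (\<lambda>j::int. 2 * j) \<union> range (\<lambda>j. 2 * j + 1)" for k :: int
      by (cases "even k") (auto elim!: evenE oddE)
    then show ?thesis by blast
  qed
  ultimately show ?thesis by simp
qed

lemma jacobi_triple_product:
  fixes a x :: complex
  assumes a0: "a \<noteq> 0" and a1: "norm a < 1" and x0: "x \<noteq> 0"
  shows "((\<lambda>k::int. a powi k\<^sup>2 * x powi k) has_sum (qpoch (a\<^sup>2) (a\<^sup>2) * qtheta (-(a*x)) (a\<^sup>2))) UNIV"
proof -
  have summable: "summable (\<lambda>m. norm (a ^ m\<^sup>2 * z ^ m))" for z :: complex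
    using a1 by (simp add: norm_mult norm_power summable_power_square)
  define S1 S2 where "S1 = (\<Sum>m. a ^ m\<^sup>2 * x ^ m)" and "S2 = (\<Sum>m. a ^ m\<^sup>2 * (1/x) ^ m)"
  have sums1: "(\<lambda>m. a ^ m\<^sup>2 * x ^ m) sums S1" and sums2: "(\<lambda>m. a ^ m\<^sup>2 * (1/x) ^ m) sums S2"
    unfolding S1_def S2_def by (intro summable_sums summable_norm_cancel[OF summable])+
  have "(\<lambda>m. a ^ m\<^sup>2 * (x ^ m + (1/x) ^ m)) sums (S1 + S2)"
    using sums_add[OF sums1 sums2] by (simp add: distrib_left)
  then have sum_eq: "S1 + S2 = qpoch (a\<^sup>2) (a\<^sup>2) * qtheta (-(a*x)) (a\<^sup>2) + 1"
    using jacobi_triple_product_sums[OF a0 a1 x0] by (rule sums_unique2)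
  have "((\<lambda>m. a ^ m\<^sup>2 * x ^ m) has_sum S1) UNIV"
    by (rule norm_summable_imp_has_sum[OF summable sums1])
  moreover have "((\<lambda>m. a ^ (Suc m)\<^sup>2 * (1/x) ^ Suc m) has_sum (S2 - 1)) UNIV"
  proof (rule norm_summable_imp_has_sum)
    show "summable (\<lambda>m. norm (a ^ (Suc m)\<^sup>2 * (1/x) ^ Suc m))"
      using summable[of "1/x"] by (subst summable_Suc_iff)
    show "(\<lambda>m. a ^ (Suc m)\<^sup>2 * (1/x) ^ Suc m) sums (S2 - 1)"
      using sums2 by (subst sums_Suc_iff) simp
  qed
  ultimately have "((\<lambda>k::int. a powi k\<^sup>2 * x powi k) has_sum (S1 + (S2 - 1))) UNIV"
    by (intro has_sum_int_nonneg_neg)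
      (simp_all add: power_int_minus_divide power_one_over del: of_nat_Suc flip: of_nat_power)
  then show ?thesis using sum_eq by (simp add: algebra_simps)
qed

lemma qtheta_dissection:
  fixes a x :: complex
  assumes a0: "a \<noteq> 0" and a1: "norm a < 1" and x0: "x \<noteq> 0"
  shows "qpoch (a\<^sup>2) (a\<^sup>2) * qtheta (-(a*x)) (a\<^sup>2)
       = qpoch (a^8) (a^8) * (qtheta (-(a^4*x\<^sup>2)) (a^8) + a * x * qtheta (-(a^8*x\<^sup>2)) (a^8))"
proof -
  define t where "t b z = (\<lambda>k::int. b powi k\<^sup>2 * z powi k)" for b z :: complex
  have a4: "a^4 \<noteq> 0" "norm (a^4) < 1" and a8: "(a^4)\<^sup>2 = a^8"
    using a0 a1 by (simp_all add: norm_power power_less_one_iff flip: power_mult)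
  have "t a x (2 * j) = t (a^4) (x\<^sup>2) j" for j
    by (simp add: t_def power_int_power power_mult_distrib)
  then have "((\<lambda>j. t a x (2 * j)) has_sum qpoch (a^8) (a^8) * qtheta (-(a^4*x\<^sup>2)) (a^8)) UNIV"
    using jacobi_triple_product[OF a4, of "x\<^sup>2"] x0 by (simp add: t_def a8)
  moreover have "t a x (2 * j + 1) = a * x * t (a^4) (a^4*x\<^sup>2) j" for j
  proof -
    have "(2 * j + 1)\<^sup>2 = 4 * j\<^sup>2 + 4 * j + 1" by (simp add: power2_eq_square algebra_simps)
    then show ?thesis
      using a0 x0 by (simp add: t_def power_int_add power_int_power power_int_mult_distrib
          power_mult_distrib mult_ac)
  qed
  then have "((\<lambda>j. t a x (2 * j + 1)) has_sum a * x * (qpoch (a^8) (a^8) * qtheta (-(a^8*x\<^sup>2)) (a^8))) UNIV"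
    using has_sum_cmult_right[OF jacobi_triple_product[OF a4, of "a^4*x\<^sup>2"], of "a * x"] a0 x0
    by (simp add: t_def a8 power_add flip: power_mult)
  ultimately have "(t a x has_sum qpoch (a^8) (a^8) * qtheta (-(a^4*x\<^sup>2)) (a^8)
      + a * x * (qpoch (a^8) (a^8) * qtheta (-(a^8*x\<^sup>2)) (a^8))) UNIV"
    by (rule has_sum_int_even_odd)
  then have "(t a x has_sum qpoch (a^8) (a^8) * (qtheta (-(a^4*x\<^sup>2)) (a^8) + a * x * qtheta (-(a^8*x\<^sup>2)) (a^8))) UNIV"
    by (simp add: algebra_simps)
  with jacobi_triple_product[OF a0 a1 x0] show ?thesis
    unfolding t_def by (rule has_sum_unique)
qed

lemma qthetas_sign_pattern_sum:
  fixes a c d p :: complex and E C :: "complex \<Rightarrow> complex"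
  assumes minus: "\<And>z. z \<in> {x, y, u, w} \<Longrightarrow> c * qtheta (-(a*z)) p = d * (E z + a * z * C z)"
    and plus: "\<And>z. z \<in> {x, y, u, w} \<Longrightarrow> c * qtheta (a*z) p = d * (E z - a * z * C z)"
  shows "c^4 * (qthetas [-(a*x), -(a*y), -(a*u), -(a*w)] p + qthetas [a*x, a*y, -(a*u), -(a*w)] p
       + qthetas [-(a*x), -(a*y), a*u, a*w] p + qthetas [a*x, a*y, a*u, a*w] p)
     = 4 * d^4 * (E x * E y + a\<^sup>2 * x * y * C x * C y) * (E u * E w + a\<^sup>2 * u * w * C u * C w)"
proof -
  let ?m = "\<lambda>z. c * qtheta (-(a*z)) p" and ?p = "\<lambda>z. c * qtheta (a*z) p"
  have "c^4 * (qthetas [-(a*x), -(a*y), -(a*u), -(a*w)] p + qthetas [a*x, a*y, -(a*u), -(a*w)] p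
       + qthetas [-(a*x), -(a*y), a*u, a*w] p + qthetas [a*x, a*y, a*u, a*w] p)
     = ?m x * ?m y * ?m u * ?m w + ?p x * ?p y * ?m u * ?m w
       + ?m x * ?m y * ?p u * ?p w + ?p x * ?p y * ?p u * ?p w"
    by (simp add: qthetas_def power4_eq_xxxx algebra_simps)
  then show ?thesis
    using minus plus by simp (simp add: algebra_simps power2_eq_square power4_eq_xxxx)
qed

theorem mainTheorem7:
  fixes q q14 x y u w :: complex
  assumes hq: "norm q < 1"
    and h14: "q14 ^ 4 = q"
    and hx: "x \<noteq> 0" and hy: "y \<noteq> 0" and hu: "u \<noteq> 0" and hv: "w \<noteq> 0"
  shows "4 * q * x * y * u * w * qthetas [-(q^2*x^2), -(q^2*y^2), -(q^2*u^2), -(q^2*w^2)] (q^2)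
       + 4 * q14^2 * x * y * qthetas [-(q^2*x^2), -(q^2*y^2), -(q*u^2), -(q*w^2)] (q^2)
       + 4 * q14^2 * u * w * qthetas [-(q*x^2), -(q*y^2), -(q^2*u^2), -(q^2*w^2)] (q^2)
       + 4 * qthetas [-(q*x^2), -(q*y^2), -(q*u^2), -(q*w^2)] (q^2)
     = qpoch (q14^2) (q14^2) ^ 4 / qpoch (q^2) (q^2) ^ 4 *
       ( qthetas [-(q14*x), -(q14*y), -(q14*u), -(q14*w)] (q14^2)
       + qthetas [q14*x, q14*y, -(q14*u), -(q14*w)] (q14^2)
       + qthetas [-(q14*x), -(q14*y), q14*u, q14*w] (q14^2)
       + qthetas [q14*x, q14*y, q14*u, q14*w] (q14^2))"
proof (cases "q = 0")
  case True
  then show ?thesis using h14 by (simp add: qthetas_def qtheta_def qpoch_def)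
next
  case False
  define a where "a = q14"
  have a0: "a \<noteq> 0" and q: "q = a^4" using False h14 by (auto simp: a_def)
  have a1: "norm a < 1" using hq by (simp add: q norm_power power_less_one_iff)
  have q2: "a^8 = q\<^sup>2" by (simp add: q flip: power_mult)
  define E C where "E z = qtheta (-(q*z\<^sup>2)) (q\<^sup>2)" and "C z = qtheta (-(q\<^sup>2*z\<^sup>2)) (q\<^sup>2)" for z
  have "qpoch (a\<^sup>2) (a\<^sup>2) * qtheta (-(a*z)) (a\<^sup>2) = qpoch (q\<^sup>2) (q\<^sup>2) * (E z + a * z * C z)"
    and "qpoch (a\<^sup>2) (a\<^sup>2) * qtheta (a*z) (a\<^sup>2) = qpoch (q\<^sup>2) (q\<^sup>2) * (E z - a * z * C z)"
    if "z \<noteq> 0" for z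
    using qtheta_dissection[OF a0 a1, of z] qtheta_dissection[OF a0 a1, of "-z"] that
    unfolding q2 q[symmetric] by (simp_all add: E_def C_def)
  then have "qpoch (a\<^sup>2) (a\<^sup>2) ^ 4 * (qthetas [-(a*x), -(a*y), -(a*u), -(a*w)] (a\<^sup>2)
       + qthetas [a*x, a*y, -(a*u), -(a*w)] (a\<^sup>2) + qthetas [-(a*x), -(a*y), a*u, a*w] (a\<^sup>2)
       + qthetas [a*x, a*y, a*u, a*w] (a\<^sup>2))
     = 4 * qpoch (q\<^sup>2) (q\<^sup>2) ^ 4 * (E x * E y + a\<^sup>2 * x * y * C x * C y) * (E u * E w + a\<^sup>2 * u * w * C u * C w)"
    using hx hy hu hv by (intro qthetas_sign_pattern_sum) auto
  moreover have "qpoch (q\<^sup>2) (q\<^sup>2) \<noteq> 0"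
    using hq by (simp add: qpoch_nonzero norm_power power_less_one_iff)
  moreover have "qthetas [-(q^2*x^2), -(q^2*y^2), -(q^2*u^2), -(q^2*w^2)] (q^2) = C x * C y * C u * C w"
    and "qthetas [-(q^2*x^2), -(q^2*y^2), -(q*u^2), -(q*w^2)] (q^2) = C x * C y * E u * E w"
    and "qthetas [-(q*x^2), -(q*y^2), -(q^2*u^2), -(q^2*w^2)] (q^2) = E x * E y * C u * C w"
    and "qthetas [-(q*x^2), -(q*y^2), -(q*u^2), -(q*w^2)] (q^2) = E x * E y * E u * E w"
    by (simp_all add: qthetas_def E_def C_def)
  ultimately show ?thesis
    unfolding a_def[symmetric] by (simp add: q field_simps power2_eq_square power4_eq_xxxx)
qed

end
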